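(* Let $D$ be a dataset of $N\ge1$ records over $\Omega$, let $r\subseteq[d]$, and let $\hat D$ be the dataset obtained by drawing $K\ge1$ records from $D$ uniformly at random with replacement. Let $\mu=\frac1N M_r(D)$ and $s(x)=\lceil K\mu(x)\rceil$ for $x\in\Omega_r$. Then $$\mathbb{E}\Big[\Big\|\tfrac1N M_r(D)-\tfrac1K M_r(\hat D)\Big\|_1\Big] = \frac{2}{K}\sum_{x\in\Omega_r} s(x)\binom{K}{s(x)}\mu(x)^{s(x)}(1-\mu(x))^{K-s(x)+1}$$ (with the convention $0^0=1$).
   Context: A dataset is a finite multiset of records in $\Omega=\Omega_1\times\dots\times\Omega_d$, each $\Omega_i$ finite. For $r\subseteq[d]$, $\Omega_r=\prod_{i\in r}\Omega_i$, $x_r=(x_i)_{i\in r}$, and the marginal $M_r(D)$ is the vector indexed by $t\in\Omega_r$ with $M_r(D)[t]=\sum_{x\in D}\mathbb{1}[x_r=t]$. *)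

theory Defs
  imports "HOL-Probability.Probability"
begin

text \<open>Records are functions nat => 'a; a record over Omega = Omega_1 x ... x Omega_d
  is an element of PiE {1..d} Omega.
  For r a subset of {1..d}, Omega_r = PiE r Omega and x_r = restrict x r.\<close>

definition marginal :: "nat set \<Rightarrow> (nat \<Rightarrow> 'a) multiset \<Rightarrow> (nat \<Rightarrow> 'a) \<Rightarrow> nat" where
  "marginal r D t = size (filter_mset (\<lambda>x. restrict x r = t) D)"

fun sample_with_replacement :: "(nat \<Rightarrow> 'a) multiset \<Rightarrow> nat \<Rightarrow> (nat \<Rightarrow> 'a) multiset pmf" where
  "sample_with_replacement D 0 = return_pmf {#}"
| "sample_with_replacement D (Suc k) =
     bind_pmf (pmf_of_multiset D) (\<lambda>x.
     bind_pmf (sample_with_replacement D k) (\<lambda>S. return_pmf (add_mset x S)))"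

end

theory Submission
  imports Defs
begin

text \<open>Sampling K records with replacement, the number of sampled records whose
  restriction to r equals t is binomially distributed with parameters K and \<open>\<mu>(t)\<close>, so
  every summand of the expected L1 distance is the mean absolute deviation of a binomial
  variable X, divided by K. Since \<open>E[X - K p] = 0\<close>, one has
  \<open>E|X - K p| = 2 E[max (K p - X) 0]\<close>, and this is a sum over \<open>k < \<lceil>K p\<rceil>\<close> whose terms
  telescope, giving De Moivre's closed form.\<close>

text \<open>The summand for k is the difference of the right-hand sides at \<open>k + 1\<close> and k.\<close>

lemma binomial_deviation_partial_sum:
  fixes p :: real and K :: nat
  assumes "s \<le> K"
  shows "(\<Sum>k<s. real (K choose k) * p ^ k * (1 - p) ^ (K - k) * (real K * p - real k))
       = real s * real (K choose s) * p ^ s * (1 - p) ^ (K - s + 1)"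
  using assms
proof (induction s)
  case 0
  then show ?case by simp
next
  case (Suc s)
  then have "s < K" by simp
  have absorb: "real (Suc s) * real (K choose Suc s) = (real K - real s) * real (K choose s)"
  proof -
    have "Suc s * (K choose Suc s) = (K - s) * (K choose s)"
      by (metis binomial_absorb_comp binomial_absorption mult.commute diff_Suc_eq_diff_pred)
    then show ?thesis
      using \<open>s < K\<close> by (metis of_nat_diff of_nat_mult less_imp_le)
  qed
  have "(\<Sum>k<Suc s. real (K choose k) * p ^ k * (1 - p) ^ (K - k) * (real K * p - real k))
      = real s * real (K choose s) * p ^ s * ((1 - p) ^ (K - s) * (1 - p))
        + real (K choose s) * p ^ s * (1 - p) ^ (K - s) * (real K * p - real s)"
    using Suc by simp
  also have "\<dots> = (real K - real s) * real (K choose s) * p ^ Suc s * (1 - p) ^ (K - s)"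
    by (simp add: algebra_simps)
  also have "\<dots> = real (Suc s) * real (K choose Suc s) * p ^ Suc s * (1 - p) ^ (K - Suc s + 1)"
    using \<open>s < K\<close> unfolding absorb by (simp add: Suc_diff_Suc)
  finally show ?case .
qed

lemma binomial_deviation_sum_eq_0:
  fixes p :: real and K :: nat
  shows "(\<Sum>k\<le>K. real (K choose k) * p ^ k * (1 - p) ^ (K - k) * (real K * p - real k)) = 0"
proof -
  have "(\<Sum>k\<le>K. real (K choose k) * p ^ k * (1 - p) ^ (K - k) * (real K * p - real k))
      = real K * p ^ K * (1 - p) + p ^ K * (real K * p - real K)"
    using binomial_deviation_partial_sum[of K K p] by (simp flip: lessThan_Suc_atMost)
  also have "\<dots> = 0"
    by (simp add: algebra_simps)
  finally show ?thesis .
qed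

lemma binomial_positive_deviation_sum:
  fixes p :: real and K :: nat
  assumes "p \<le> 1"
  defines "s \<equiv> nat \<lceil>real K * p\<rceil>"
  shows "(\<Sum>k\<le>K. real (K choose k) * p ^ k * (1 - p) ^ (K - k) * max (real K * p - real k) 0)
       = real s * real (K choose s) * p ^ s * (1 - p) ^ (K - s + 1)"
proof -
  have "s \<le> K"
    using assms mult_left_le[of p "real K"] by (simp add: s_def ceiling_le_iff nat_le_iff)
  have below_s: "k < s \<longleftrightarrow> real k < real K * p" for k
    unfolding s_def by (metis less_ceiling_iff of_int_of_nat_eq zless_nat_eq_int_zless)
  have "(\<Sum>k\<le>K. real (K choose k) * p ^ k * (1 - p) ^ (K - k) * max (real K * p - real k) 0)
      = (\<Sum>k\<in>{k \<in> {..K}. k < s}. real (K choose k) * p ^ k * (1 - p) ^ (K - k) * (real K * p - real k))"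
    by (subst sum.inter_filter) (auto simp: below_s max_def intro!: sum.cong)
  also have "{k \<in> {..K}. k < s} = {..<s}"
    using \<open>s \<le> K\<close> by auto
  finally show ?thesis
    using binomial_deviation_partial_sum[OF \<open>s \<le> K\<close>] by simp
qed

lemma binomial_mean_absolute_deviation:
  fixes p :: real and K :: nat
  assumes "0 \<le> p" "p \<le> 1"
  defines "s \<equiv> nat \<lceil>real K * p\<rceil>"
  shows "measure_pmf.expectation (binomial_pmf K p) (\<lambda>k. \<bar>real k - real K * p\<bar>)
       = 2 * (real s * real (K choose s) * p ^ s * (1 - p) ^ (K - s + 1))"
proof -
  define b where "b k = real (K choose k) * p ^ k * (1 - p) ^ (K - k)" for k
  have "measure_pmf.expectation (binomial_pmf K p) (\<lambda>k. \<bar>real k - real K * p\<bar>)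
      = (\<Sum>k\<le>K. b k * (2 * max (real K * p - real k) 0 - (real K * p - real k)))"
    using assms by (subst expectation_binomial_pmf') (auto simp: b_def max_def intro!: sum.cong)
  also have "\<dots> = 2 * (\<Sum>k\<le>K. b k * max (real K * p - real k) 0)
                  - (\<Sum>k\<le>K. b k * (real K * p - real k))"
    by (simp add: right_diff_distrib sum_subtractf sum_distrib_left ac_simps)
  finally show ?thesis
    using binomial_positive_deviation_sum[OF \<open>p \<le> 1\<close>] binomial_deviation_sum_eq_0[of K p]
    by (simp add: b_def s_def)
qed

lemma size_filter_mset_eq_sum_count:
  "size (filter_mset P M) = (\<Sum>x\<in>{x \<in> set_mset M. P x}. count M x)"
  by (simp add: size_multiset_overloaded_eq)

lemma measure_pmf_of_multiset:
  assumes "M \<noteq> {#}"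
  shows "measure (pmf_of_multiset M) A = real (size (filter_mset (\<lambda>x. x \<in> A) M)) / real (size M)"
proof -
  have "measure (pmf_of_multiset M) A = measure (pmf_of_multiset M) (A \<inter> set_mset M)"
    using measure_Int_set_pmf[of "pmf_of_multiset M" A] assms by simp
  also have "\<dots> = (\<Sum>x\<in>A \<inter> set_mset M. real (count M x)) / real (size M)"
    using assms by (simp add: measure_measure_pmf_finite sum_divide_distrib)
  also have "(\<Sum>x\<in>A \<inter> set_mset M. real (count M x)) = real (size (filter_mset (\<lambda>x. x \<in> A) M))"
    by (simp add: size_filter_mset_eq_sum_count Int_commute Collect_conj_eq)
  finally show ?thesis .
qed

lemma map_pmf_of_multiset_eq_bernoulli:
  assumes "M \<noteq> {#}"
  shows "map_pmf P (pmf_of_multiset M) = bernoulli_pmf (real (size (filter_mset P M)) / real (size M))"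
    (is "_ = bernoulli_pmf ?p")
proof (rule pmf_eqI)
  fix b :: bool
  have size_pos: "real (size M) > 0"
    using assms by (simp add: nonempty_has_size)
  have "0 \<le> ?p" "?p \<le> 1"
    using size_pos by (simp_all add: divide_le_eq_1)
  have pmf_map_eq: "pmf (map_pmf P (pmf_of_multiset M)) c
      = real (size (filter_mset (\<lambda>x. P x = c) M)) / real (size M)" for c
    unfolding pmf_map measure_pmf_of_multiset[OF assms] vimage_singleton_eq ..
  have "real (size (filter_mset (\<lambda>x. \<not> P x) M)) = real (size M) - real (size (filter_mset P M))"
    by (metis multiset_partition add_diff_cancel_left' of_nat_add size_union)
  then have complement: "real (size (filter_mset (\<lambda>x. \<not> P x) M)) / real (size M) = 1 - ?p"
    using size_pos by (metis diff_divide_distrib divide_self less_irrefl)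
  have pmf_True: "pmf (map_pmf P (pmf_of_multiset M)) True = ?p"
    unfolding pmf_map_eq eq_True ..
  have pmf_False: "pmf (map_pmf P (pmf_of_multiset M)) False = 1 - ?p"
    unfolding pmf_map_eq eq_False by (rule complement)
  show "pmf (map_pmf P (pmf_of_multiset M)) b = pmf (bernoulli_pmf ?p) b"
    using pmf_bernoulli_True[OF \<open>0 \<le> ?p\<close> \<open>?p \<le> 1\<close>] pmf_bernoulli_False[OF \<open>0 \<le> ?p\<close> \<open>?p \<le> 1\<close>]
    by (cases b) (simp_all only: pmf_True pmf_False)
qed

lemma finite_set_pmf_sample_with_replacement:
  "D \<noteq> {#} \<Longrightarrow> finite (set_pmf (sample_with_replacement D k))"
  by (induction k) (auto simp: set_bind_pmf)

lemma map_pmf_size_filter_sample_with_replacement: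
  fixes P :: "(nat \<Rightarrow> 'a) \<Rightarrow> bool"
  assumes "D \<noteq> {#}"
  defines "p \<equiv> real (size (filter_mset P D)) / real (size D)"
  shows "map_pmf (\<lambda>S. size (filter_mset P S)) (sample_with_replacement D k) = binomial_pmf k p"
proof -
  have p: "p \<in> {0..1}"
    unfolding p_def using assms by (simp add: nonempty_has_size)
  have size_filter_add_mset:
    "size (filter_mset P (add_mset x S)) = (if P x then 1 else 0) + size (filter_mset P S)" for x S
    by simp
  show ?thesis
  proof (induction k)
    case 0
    show ?case using binomial_pmf_0[OF p] by simp
  next
    case (Suc k)
    have "map_pmf (\<lambda>S. size (filter_mset P S)) (sample_with_replacement D (Suc k))
        = bind_pmf (pmf_of_multiset D) (\<lambda>x.
            bind_pmf (map_pmf (\<lambda>S. size (filter_mset P S)) (sample_with_replacement D k))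
              (\<lambda>c. return_pmf ((if P x then 1 else 0) + c)))"
      by (simp add: map_bind_pmf bind_map_pmf size_filter_add_mset del: filter_mset_add_mset)
    also have "\<dots> = bind_pmf (map_pmf P (pmf_of_multiset D)) (\<lambda>b.
            bind_pmf (binomial_pmf k p) (\<lambda>c. return_pmf ((if b then 1 else 0) + c)))"
      by (simp add: Suc.IH bind_map_pmf)
    also have "\<dots> = binomial_pmf (Suc k) p"
      unfolding map_pmf_of_multiset_eq_bernoulli[OF assms(1)] p_def[symmetric]
      by (rule binomial_pmf_Suc[OF p, symmetric])
    finally show ?case .
  qed
qed

lemma expectation_marginal_deviation_sample_with_replacement:
  fixes D :: "(nat \<Rightarrow> 'a) multiset" and r :: "nat set" and t :: "nat \<Rightarrow> 'a" and K :: nat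
  assumes "D \<noteq> {#}" "K > 0"
  defines "\<mu> \<equiv> real (marginal r D t) / real (size D)"
  defines "s \<equiv> nat \<lceil>real K * \<mu>\<rceil>"
  shows "measure_pmf.expectation (sample_with_replacement D K)
           (\<lambda>Dh. \<bar>\<mu> - real (marginal r Dh t) / real K\<bar>)
       = 2 / real K * (real s * real (K choose s) * \<mu> ^ s * (1 - \<mu>) ^ (K - s + 1))"
proof -
  let ?count = "\<lambda>S. size (filter_mset (\<lambda>x. restrict x r = t) S)"
  have marginal_eq_count: "marginal r S t = ?count S" for S
    unfolding marginal_def ..
  have "0 \<le> \<mu>" "\<mu> \<le> 1"
    using assms(1) by (simp_all add: \<mu>_def marginal_eq_count divide_le_eq_1 nonempty_has_size)
  have rescale: "\<bar>\<mu> - x / real K\<bar> = \<bar>x - real K * \<mu>\<bar> / real K" for x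
  proof -
    have "\<mu> - x / real K = - ((x - real K * \<mu>) / real K)"
      using \<open>K > 0\<close> by (simp add: field_simps)
    then show ?thesis
      by (simp add: abs_divide)
  qed
  have "measure_pmf.expectation (sample_with_replacement D K)
          (\<lambda>Dh. \<bar>\<mu> - real (marginal r Dh t) / real K\<bar>)
      = measure_pmf.expectation (map_pmf ?count (sample_with_replacement D K))
          (\<lambda>k. \<bar>real k - real K * \<mu>\<bar>) / real K"
    by (simp add: marginal_eq_count rescale)
  also have "\<dots> = measure_pmf.expectation (binomial_pmf K \<mu>) (\<lambda>k. \<bar>real k - real K * \<mu>\<bar>) / real K"
    unfolding map_pmf_size_filter_sample_with_replacement[OF assms(1)] \<mu>_def marginal_eq_count ..
  finally show ?thesis
    using binomial_mean_absolute_deviation[OF \<open>0 \<le> \<mu>\<close> \<open>\<mu> \<le> 1\<close>, of K] by (simp add: s_def)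
qed

theorem mainTheorem10:
  fixes d :: nat and \<Omega> :: "nat \<Rightarrow> 'a set" and D :: "(nat \<Rightarrow> 'a) multiset"
    and r :: "nat set" and N K :: nat
  assumes fin: "\<And>i. i \<in> {1..d} \<Longrightarrow> finite (\<Omega> i)"
    and D_rec: "set_mset D \<subseteq> PiE {1..d} \<Omega>"
    and N_def: "size D = N" and N_pos: "N \<ge> 1"
    and r_sub: "r \<subseteq> {1..d}"
    and K_pos: "K \<ge> 1"
  shows "measure_pmf.expectation (sample_with_replacement D K)
           (\<lambda>Dh. \<Sum>t\<in>PiE r \<Omega>. \<bar>real (marginal r D t) / real N - real (marginal r Dh t) / real K\<bar>)
         = 2 / real K * (\<Sum>t\<in>PiE r \<Omega>.
             let \<mu> = real (marginal r D t) / real N; s = nat \<lceil>real K * \<mu>\<rceil> in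
             real s * real (K choose s) * \<mu> ^ s * (1 - \<mu>) ^ (K - s + 1))"
proof -
  have "D \<noteq> {#}"
    using N_def N_pos by auto
  then have "integrable (sample_with_replacement D K) f" for f :: "_ \<Rightarrow> real"
    by (intro integrable_measure_pmf_finite finite_set_pmf_sample_with_replacement)
  then have "measure_pmf.expectation (sample_with_replacement D K)
           (\<lambda>Dh. \<Sum>t\<in>PiE r \<Omega>. \<bar>real (marginal r D t) / real N - real (marginal r Dh t) / real K\<bar>)
      = (\<Sum>t\<in>PiE r \<Omega>. measure_pmf.expectation (sample_with_replacement D K)
           (\<lambda>Dh. \<bar>real (marginal r D t) / real N - real (marginal r Dh t) / real K\<bar>))"
    by (intro Bochner_Integration.integral_sum)
  also have "\<dots> = 2 / real K * (\<Sum>t\<in>PiE r \<Omega>.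
             let \<mu> = real (marginal r D t) / real N; s = nat \<lceil>real K * \<mu>\<rceil> in
             real s * real (K choose s) * \<mu> ^ s * (1 - \<mu>) ^ (K - s + 1))"
    using expectation_marginal_deviation_sample_with_replacement[OF \<open>D \<noteq> {#}\<close>, of K r]
      K_pos N_def by (simp add: sum_distrib_left Let_def)
  finally show ?thesis .
qed

end
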